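(* Let $m,n$ be positive integers with $n\ge 2$, let $\Pi$ be a regular $(nm+2)$-gon, and let $\Gamma^m_{A_{n-1}}$ and $\tau_m$ be the quiver of $m$-diagonals of $\Pi$ and the rotation map described in the context. Then $(\Gamma^m_{A_{n-1}},\tau_m)$ is a connected stable translation quiver, i.e. it is not a disjoint union of two non-empty stable translation subquivers.
   Context: The vertices of $\Pi$ are labelled $1,\dots,nm+2$ clockwise, and vertex labels are taken modulo $nm+2$. A diagonal with endpoints $i,j$ is written $(i,j)=(j,i)$. An $m$-diagonal is a diagonal of $\Pi$ that divides $\Pi$ into an $(mj+2)$-gon and an $(m(n-j)+2)$-gon for some integer $1\le j\le n-1$. The quiver $\Gamma^m_{A_{n-1}}$ has as vertices the $m$-diagonals of $\Pi$. There is an arrow $D\to D'$ (and at most one) exactly when $D$ and $D'$ share an endpoint $i$, with other endpoints $j$ and $j'$ respectively, such that $D$, $D'$ and the boundary arc from $j$ to $j'$ not containing $i$ bound an $(m+2)$-gon, and $D$ is rotated onto the line through $D'$ by a clockwise rotation about $i$. Equivalently, $D=(i,j)$ and $D'=(i,j+m)$ are both $m$-diagonals. The map $\tau_m$ sends an $m$-diagonal to its image under the anticlockwise rotation of $\Pi$ about its centre through $2m\pi/(nm+2)$, that is $(i,j)\mapsto(i-m,j-m)$. A translation quiver is a pair $(\Gamma,\tau)$ with the following properties: $\Gamma$ is a locally finite quiver with vertex set $\Gamma_0$; $\tau:\Gamma_0'\to\Gamma_0$ is an injective map defined on a subset $\Gamma_0'\subseteq\Gamma_0$; and for all $X\in\Gamma_0$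 and $Y\in\Gamma_0'$ the number of arrows $X\to Y$ equals the number of arrows $\tau(Y)\to X$. The translation quiver is stable if $\Gamma_0'=\Gamma_0$ and $\tau$ is bijective. *)

theory Defs
  imports Main
begin

text \<open>A quiver with at most one arrow between any two vertices is given by its
vertex set V and its arrow relation A (A x y means there is an arrow x \<rightarrow> y).
The number of arrows X \<rightarrow> Y is then 1 if A X Y and 0 otherwise.\<close>

definition quiver :: "'a set \<Rightarrow> ('a \<Rightarrow> 'a \<Rightarrow> bool) \<Rightarrow> bool" where
  "quiver V A \<longleftrightarrow> (\<forall>x y. A x y \<longrightarrow> x \<in> V \<and> y \<in> V)"

definition locally_finite :: "'a set \<Rightarrow> ('a \<Rightarrow> 'a \<Rightarrow> bool) \<Rightarrow> bool" where
  "locally_finite V A \<longleftrightarrow> (\<forall>x\<in>V. finite {y. A x y} \<and> finite {y. A y x})"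

definition translation_quiver ::
  "'a set \<Rightarrow> ('a \<Rightarrow> 'a \<Rightarrow> bool) \<Rightarrow> 'a set \<Rightarrow> ('a \<Rightarrow> 'a) \<Rightarrow> bool" where
  "translation_quiver V A V' \<tau> \<longleftrightarrow>
     quiver V A \<and> locally_finite V A \<and> V' \<subseteq> V \<and> \<tau> ` V' \<subseteq> V \<and> inj_on \<tau> V' \<and>
     (\<forall>X\<in>V. \<forall>Y\<in>V'. A X Y \<longleftrightarrow> A (\<tau> Y) X)"

definition stable_translation_quiver ::
  "'a set \<Rightarrow> ('a \<Rightarrow> 'a \<Rightarrow> bool) \<Rightarrow> ('a \<Rightarrow> 'a) \<Rightarrow> bool" where
  "stable_translation_quiver V A \<tau> \<longleftrightarrow>
     translation_quiver V A V \<tau> \<and> bij_betw \<tau> V V"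

definition restr_arrows :: "('a \<Rightarrow> 'a \<Rightarrow> bool) \<Rightarrow> 'a set \<Rightarrow> 'a \<Rightarrow> 'a \<Rightarrow> bool" where
  "restr_arrows A W = (\<lambda>x y. A x y \<and> x \<in> W \<and> y \<in> W)"

definition connected_stable_translation_quiver ::
  "'a set \<Rightarrow> ('a \<Rightarrow> 'a \<Rightarrow> bool) \<Rightarrow> ('a \<Rightarrow> 'a) \<Rightarrow> bool" where
  "connected_stable_translation_quiver V A \<tau> \<longleftrightarrow>
     stable_translation_quiver V A \<tau> \<and>
     \<not> (\<exists>V1 V2. V1 \<noteq> {} \<and> V2 \<noteq> {} \<and> V1 \<inter> V2 = {} \<and> V1 \<union> V2 = V \<and>
           (\<forall>x y. A x y \<longrightarrow> (x \<in> V1 \<and> y \<in> V1) \<or> (x \<in> V2 \<and> y \<in> V2)) \<and>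
           stable_translation_quiver V1 (restr_arrows A V1) \<tau> \<and>
           stable_translation_quiver V2 (restr_arrows A V2) \<tau>)"

text \<open>Vertices of \<Pi> are labelled 1..N with N = nm+2; labels are taken modulo N,
lab k being the representative of k in {1..N}.\<close>
definition lab :: "int \<Rightarrow> int \<Rightarrow> int" where
  "lab N k = (k - 1) mod N + 1"

text \<open>The polygon cut off on the
clockwise side from i to j has ((j - i) mod N) + 1 vertices; it is an (mk+2)-gon
(and the other part an (m(n-k)+2)-gon) iff (j - i) mod N = mk+1.\<close>
definition m_diagonal :: "nat \<Rightarrow> nat \<Rightarrow> int set \<Rightarrow> bool" where
  "m_diagonal m n D \<longleftrightarrow>
     (let N = int (n*m+2) in
      \<exists>i j. i \<in> {1..N} \<and> j \<in> {1..N} \<and> i \<noteq> j \<and> D = {i, j} \<and>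
        (\<exists>k::nat. 1 \<le> k \<and> k \<le> n - 1 \<and>
           (j - i) mod N = int (m*k + 1) \<and> (i - j) mod N = int (m*(n-k) + 1)))"

definition m_diagonals :: "nat \<Rightarrow> nat \<Rightarrow> int set set" where
  "m_diagonals m n = {D. m_diagonal m n D}"

definition Gamma_arrow :: "nat \<Rightarrow> nat \<Rightarrow> int set \<Rightarrow> int set \<Rightarrow> bool" where
  "Gamma_arrow m n D D' \<longleftrightarrow>
     (let N = int (n*m+2) in
      m_diagonal m n D \<and> m_diagonal m n D' \<and>
      (\<exists>i j. i \<in> {1..N} \<and> j \<in> {1..N} \<and> D = {i, j} \<and> D' = {i, lab N (j + int m)}))"

definition tau_m :: "nat \<Rightarrow> nat \<Rightarrow> int set \<Rightarrow> int set" where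
  "tau_m m n D = (\<lambda>v. lab (int (n*m+2)) (v - int m)) ` D"

end

theory Submission
  imports Defs
begin

(* Every m-diagonal is diag i k = (i, i + mk + 1) for some 1 <= k <= n - 1. The arrows
   diag i k -> diag i (k + 1) join the diagonals with first endpoint i into one path, and the first
   diagonal (i, i + m + 1) of that path is the last one of the path starting at i + m + 1. Hence a
   set of diagonals closed under arrows and under tau_m, the rotation by -m, contains diag i 1 iff
   it contains diag (i + m) 1 iff it contains diag (i + m + 1) 1, so it is empty or contains all
   diagonals. *)

lemma connected_stable_translation_quiverI:
  assumes stable: "stable_translation_quiver V A \<tau>"
    and closed_is_all: "\<And>W. W \<subseteq> V \<Longrightarrow> W \<noteq> {} \<Longrightarrow> (\<And>x y. A x y \<Longrightarrow> x \<in> W \<longleftrightarrow> y \<in> W) \<Longrightarrow>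
        \<tau> ` W = W \<Longrightarrow> W = V"
  shows "connected_stable_translation_quiver V A \<tau>"
  unfolding connected_stable_translation_quiver_def
proof (intro conjI stable notI, elim exE conjE)
  fix V1 V2
  assume ne1: "V1 \<noteq> {}" and ne2: "V2 \<noteq> {}" and disj: "V1 \<inter> V2 = {}" and union: "V1 \<union> V2 = V"
    and sep: "\<forall>x y. A x y \<longrightarrow> x \<in> V1 \<and> y \<in> V1 \<or> x \<in> V2 \<and> y \<in> V2"
    and stable1: "stable_translation_quiver V1 (restr_arrows A V1) \<tau>"
  have "\<tau> ` V1 = V1"
    using stable1 by (simp add: stable_translation_quiver_def bij_betw_def)
  moreover have "x \<in> V1 \<longleftrightarrow> y \<in> V1" if "A x y" for x y
    using sep that disj by blast
  ultimately have "V1 = V"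
    using closed_is_all[of V1] union ne1 by blast
  then show False
    using ne2 disj union by blast
qed

lemma int_pred_constant:
  fixes P :: "int \<Rightarrow> bool"
  assumes "\<And>j. P (j + 1) \<longleftrightarrow> P j"
  shows "P i \<longleftrightarrow> P j"
proof -
  have "P (i + d) \<longleftrightarrow> P i" for d
  proof (induction d rule: int_induct[where k = 0])
    case (step2 d)
    then show ?case using assms[of "i + (d - 1)"] by simp
  qed (use assms in \<open>simp_all add: add.assoc[symmetric]\<close>)
  from this[of "j - i"] show ?thesis by simp
qed

lemma lab_mod: "lab N a mod N = a mod N"
  by (simp add: lab_def mod_add_left_eq)

lemma lab_eq_iff: "lab N x = lab N y \<longleftrightarrow> x mod N = y mod N"
  by (metis lab_def lab_mod mod_diff_cong)

lemma lab_add_lab: "lab N (lab N a + c) = lab N (a + c)"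
  by (metis lab_eq_iff lab_mod mod_add_left_eq)

lemma lab_in_range:
  assumes "N > 0"
  shows "lab N k \<in> {1..N}"
  using pos_mod_bound[OF assms, of "k - 1"] pos_mod_sign[OF assms, of "k - 1"]
  by (simp add: lab_def)

lemma lab_eq_self: "x \<in> {1..N} \<Longrightarrow> lab N x = x"
  by (simp add: lab_def)

abbreviation polygon_size :: "nat \<Rightarrow> nat \<Rightarrow> int" where
  "polygon_size m n \<equiv> int (n * m + 2)"

lemma polygon_size_pos: "0 < polygon_size m n"
  by (simp only: of_nat_0_less_iff)

definition rotation :: "int \<Rightarrow> int \<Rightarrow> int set \<Rightarrow> int set" where
  "rotation N c D = (\<lambda>v. lab N (v + c)) ` D"

lemma tau_m_eq_rotation: "tau_m m n = rotation (polygon_size m n) (- int m)"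
  by (simp add: tau_m_def rotation_def fun_eq_iff)

lemma rotation_pair: "rotation N c {lab N a, lab N b} = {lab N (a + c), lab N (b + c)}"
  by (simp add: rotation_def lab_add_lab)

lemma rotation_rotation: "rotation N c (rotation N d D) = rotation N (d + c) D"
  by (simp add: rotation_def image_image lab_add_lab add.assoc)

lemma rotation_zero: "D \<subseteq> {1..N} \<Longrightarrow> rotation N 0 D = D"
  by (simp add: rotation_def lab_eq_self subset_iff)

lemma rotation_inverse: "D \<subseteq> {1..N} \<Longrightarrow> rotation N c (rotation N (- c) D) = D"
  by (simp add: rotation_rotation rotation_zero)

definition diag :: "nat \<Rightarrow> nat \<Rightarrow> int \<Rightarrow> nat \<Rightarrow> int set" where
  "diag m n i k = {lab (polygon_size m n) i, lab (polygon_size m n) (i + int (m * k + 1))}"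

lemma rotation_diag: "rotation (polygon_size m n) c (diag m n i k) = diag m n (i + c) k"
  by (simp add: diag_def rotation_pair algebra_simps)

lemma diag_offset_bounds:
  assumes "1 \<le> k" "k \<le> n - 1"
  shows "int (m * k + 1) < polygon_size m n"
    and "polygon_size m n - int (m * k + 1) = int (m * (n - k) + 1)"
proof -
  have "m * k + m \<le> n * m"
    using assms mult_le_mono2[of "k + 1" n m] by (simp add: algebra_simps)
  moreover have "m * (n - k) = n * m - m * k"
    by (simp add: algebra_simps diff_mult_distrib2)
  ultimately show "int (m * k + 1) < polygon_size m n"
    and "polygon_size m n - int (m * k + 1) = int (m * (n - k) + 1)"
    by linarith+
qed

lemma m_diagonal_iff_diag:
  "m_diagonal m n D \<longleftrightarrow> (\<exists>i k. 1 \<le> k \<and> k \<le> n - 1 \<and> D = diag m n i k)"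
proof
  let ?N = "polygon_size m n"
  assume "m_diagonal m n D"
  then obtain i j k where ij: "i \<in> {1..?N}" "j \<in> {1..?N}" "D = {i, j}"
    and k: "1 \<le> k" "k \<le> n - 1" "(j - i) mod ?N = int (m * k + 1)"
    unfolding m_diagonal_def Let_def by blast
  have "(i + int (m * k + 1)) mod ?N = j mod ?N"
    unfolding k(3)[symmetric] by (simp add: mod_add_right_eq)
  then have "lab ?N (i + int (m * k + 1)) = j"
    using ij by (metis lab_eq_iff lab_eq_self)
  then have "D = diag m n i k"
    using ij by (simp add: diag_def lab_eq_self)
  with k show "\<exists>i k. 1 \<le> k \<and> k \<le> n - 1 \<and> D = diag m n i k"
    by blast
next
  let ?N = "polygon_size m n"
  assume "\<exists>i k. 1 \<le> k \<and> k \<le> n - 1 \<and> D = diag m n i k"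
  then obtain i k where k: "1 \<le> k" "k \<le> n - 1" and D: "D = diag m n i k"
    by blast
  define d where "d = int (m * k + 1)"
  have "0 < d"
    unfolding d_def by (simp only: of_nat_0_less_iff)
  with diag_offset_bounds[OF k, of m]
  have d: "0 < d" "d < ?N" "?N - d = int (m * (n - k) + 1)"
    unfolding d_def by blast+
  define i' j' where "i' = lab ?N i" and "j' = lab ?N (i + d)"
  have range: "i' \<in> {1..?N}" "j' \<in> {1..?N}"
    unfolding i'_def j'_def using polygon_size_pos by (simp_all only: lab_in_range)
  have forward: "(j' - i') mod ?N = d"
    unfolding i'_def j'_def using d by (simp add: mod_diff_cong lab_mod)
  then have backward: "(i' - j') mod ?N = int (m * (n - k) + 1)"
    using zmod_zminus1_eq_if[of "j' - i'" ?N] d by simp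
  have "i' \<noteq> j'"
    using forward d by auto
  with range forward backward k D show "m_diagonal m n D"
    unfolding m_diagonal_def Let_def i'_def j'_def d_def diag_def by blast
qed

lemma m_diagonal_diag: "1 \<le> k \<Longrightarrow> k \<le> n - 1 \<Longrightarrow> m_diagonal m n (diag m n i k)"
  using m_diagonal_iff_diag by blast

lemma m_diagonal_subset: "m_diagonal m n D \<Longrightarrow> D \<subseteq> {1..polygon_size m n}"
  unfolding m_diagonal_def Let_def by auto

lemma m_diagonal_rotation: "m_diagonal m n D \<Longrightarrow> m_diagonal m n (rotation (polygon_size m n) c D)"
  by (metis m_diagonal_iff_diag rotation_diag)

lemma Gamma_arrow_iff:
  "Gamma_arrow m n X Y \<longleftrightarrow> m_diagonal m n X \<and> m_diagonal m n Y \<and>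
    (\<exists>i j. X = {lab (polygon_size m n) i, lab (polygon_size m n) j} \<and>
           Y = {lab (polygon_size m n) i, lab (polygon_size m n) (j + int m)})"
  (is "_ \<longleftrightarrow> _ \<and> _ \<and> (\<exists>i j. ?ends X Y i j)")
proof
  assume "Gamma_arrow m n X Y"
  then show "m_diagonal m n X \<and> m_diagonal m n Y \<and> (\<exists>i j. ?ends X Y i j)"
    unfolding Gamma_arrow_def Let_def by (metis lab_eq_self)
next
  let ?N = "polygon_size m n"
  assume "m_diagonal m n X \<and> m_diagonal m n Y \<and> (\<exists>i j. ?ends X Y i j)"
  then obtain i j where "m_diagonal m n X" "m_diagonal m n Y" "?ends X Y i j"
    by blast
  moreover have "lab ?N i \<in> {1..?N}" "lab ?N j \<in> {1..?N}"
    using lab_in_range polygon_size_pos by blast+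
  moreover have "Y = {lab ?N i, lab ?N (lab ?N j + int m)}"
    using \<open>?ends X Y i j\<close> by (simp add: lab_add_lab)
  ultimately show "Gamma_arrow m n X Y"
    unfolding Gamma_arrow_def Let_def by blast
qed

lemma Gamma_arrow_translate:
  assumes "Gamma_arrow m n X Y"
  shows "Gamma_arrow m n (tau_m m n Y) X"
proof -
  let ?N = "polygon_size m n"
  obtain i j where ends: "X = {lab ?N i, lab ?N j}" "Y = {lab ?N i, lab ?N (j + int m)}"
    and diags: "m_diagonal m n X" "m_diagonal m n Y"
    using assms unfolding Gamma_arrow_iff by blast
  have "tau_m m n Y = {lab ?N j, lab ?N (i - int m)}"
    unfolding ends tau_m_eq_rotation rotation_pair by auto
  moreover have "X = {lab ?N j, lab ?N (i - int m + int m)}"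
    using ends by auto
  moreover have "m_diagonal m n (tau_m m n Y)"
    using diags m_diagonal_rotation tau_m_eq_rotation by metis
  ultimately show ?thesis
    using diags unfolding Gamma_arrow_iff by blast
qed

lemma Gamma_arrow_translate_inverse:
  assumes "Gamma_arrow m n Z X"
  shows "Gamma_arrow m n X (rotation (polygon_size m n) (int m) Z)"
proof -
  let ?N = "polygon_size m n"
  obtain a b where ends: "Z = {lab ?N a, lab ?N b}" "X = {lab ?N a, lab ?N (b + int m)}"
    and diags: "m_diagonal m n Z" "m_diagonal m n X"
    using assms unfolding Gamma_arrow_iff by blast
  have "rotation ?N (int m) Z = {lab ?N (b + int m), lab ?N (a + int m)}"
    unfolding ends rotation_pair by auto
  moreover have "X = {lab ?N (b + int m), lab ?N a}"
    using ends by auto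
  moreover have "m_diagonal m n (rotation ?N (int m) Z)"
    using diags m_diagonal_rotation by blast
  ultimately show ?thesis
    using diags unfolding Gamma_arrow_iff by blast
qed

lemma stable_translation_quiver_m_diagonals:
  "stable_translation_quiver (m_diagonals m n) (Gamma_arrow m n) (tau_m m n)"
proof -
  let ?N = "polygon_size m n" and ?V = "m_diagonals m n"
  let ?untau = "rotation ?N (int m)"
  have untau_tau: "?untau (tau_m m n D) = D" and tau_untau: "tau_m m n (?untau D) = D"
    if "D \<in> ?V" for D
    using that rotation_inverse[of D ?N "int m"] rotation_inverse[of D ?N "- int m"]
      m_diagonal_subset[of m n D]
    by (simp_all add: tau_m_eq_rotation m_diagonals_def)
  have tau_in: "tau_m m n D \<in> ?V" and untau_in: "?untau D \<in> ?V" if "D \<in> ?V" for D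
    using that m_diagonal_rotation by (simp_all add: tau_m_eq_rotation m_diagonals_def)
  have bij: "bij_betw (tau_m m n) ?V ?V"
    by (rule bij_betw_byWitness[where f' = ?untau]) (use untau_tau tau_untau tau_in untau_in in auto)
  have finite: "finite ?V"
    using finite_subset[of ?V "Pow {1..?N}"] m_diagonal_subset unfolding m_diagonals_def by blast
  have arrow_ends: "x \<in> ?V \<and> y \<in> ?V" if "Gamma_arrow m n x y" for x y
    using that unfolding Gamma_arrow_iff m_diagonals_def by blast
  have "quiver ?V (Gamma_arrow m n)"
    unfolding quiver_def using arrow_ends by blast
  moreover have "{y. Gamma_arrow m n x y} \<subseteq> ?V" "{y. Gamma_arrow m n y x} \<subseteq> ?V" for x
    using arrow_ends by blast+
  then have "locally_finite ?V (Gamma_arrow m n)"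
    unfolding locally_finite_def using finite finite_subset by meson
  moreover have "tau_m m n ` ?V \<subseteq> ?V" "inj_on (tau_m m n) ?V"
    using bij by (simp_all add: bij_betw_def)
  moreover have "\<forall>X\<in>?V. \<forall>Y\<in>?V. Gamma_arrow m n X Y \<longleftrightarrow> Gamma_arrow m n (tau_m m n Y) X"
    using Gamma_arrow_translate Gamma_arrow_translate_inverse untau_tau by metis
  ultimately show ?thesis
    using bij unfolding stable_translation_quiver_def translation_quiver_def by blast
qed

lemma Gamma_arrow_diag:
  assumes "1 \<le> k" "k + 1 \<le> n - 1"
  shows "Gamma_arrow m n (diag m n i k) (diag m n i (k + 1))"
proof -
  have "i + int (m * (k + 1) + 1) = (i + int (m * k + 1)) + int m"
    by (simp add: algebra_simps)
  then have "diag m n i (k + 1) =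
      {lab (polygon_size m n) i, lab (polygon_size m n) (i + int (m * k + 1) + int m)}"
    unfolding diag_def by (rule arg_cong)
  then show ?thesis
    using assms m_diagonal_diag[of k n m i] m_diagonal_diag[of "k + 1" n m i]
    unfolding Gamma_arrow_iff diag_def[of m n i k] by auto
qed

lemma diag_first_eq_last:
  assumes "n \<ge> 2"
  shows "diag m n i 1 = diag m n (i + int m + 1) (n - 1)"
proof -
  have "polygon_size m n - int (m + 1) = int (m * (n - 1) + 1)"
    using diag_offset_bounds(2)[of 1 n m] assms by simp
  then have "i + int m + 1 + int (m * (n - 1) + 1) = i + polygon_size m n"
    by simp
  then have "lab (polygon_size m n) (i + int m + 1 + int (m * (n - 1) + 1)) = lab (polygon_size m n) i"
    by (simp only: lab_eq_iff mod_add_self2)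
  then show ?thesis
    unfolding diag_def by (simp add: insert_commute ac_simps)
qed

lemma diag_in_arrow_closed_iff:
  assumes closed: "\<And>X Y. Gamma_arrow m n X Y \<Longrightarrow> X \<in> W \<longleftrightarrow> Y \<in> W"
    and "1 \<le> k" "k \<le> n - 1"
  shows "diag m n i k \<in> W \<longleftrightarrow> diag m n i 1 \<in> W"
  using assms(2,3)
proof (induction k rule: dec_induct)
  case (step k)
  then show ?case
    using closed[OF Gamma_arrow_diag[of k n m i]] by simp
qed simp

lemma closed_subset_eq_m_diagonals:
  assumes sub: "W \<subseteq> m_diagonals m n" and nonempty: "W \<noteq> {}"
    and closed: "\<And>X Y. Gamma_arrow m n X Y \<Longrightarrow> X \<in> W \<longleftrightarrow> Y \<in> W"
    and tau_closed: "tau_m m n ` W = W"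
  shows "W = m_diagonals m n"
proof -
  define P where "P i \<longleftrightarrow> diag m n i 1 \<in> W" for i
  obtain i0 k0 where k0: "1 \<le> k0" "k0 \<le> n - 1" and "diag m n i0 k0 \<in> W"
    using sub nonempty unfolding m_diagonals_def m_diagonal_iff_diag by blast
  then have "P i0" and n: "n \<ge> 2"
    using diag_in_arrow_closed_iff[OF closed k0] unfolding P_def by auto
  have row: "diag m n i k \<in> W \<longleftrightarrow> P i" if "1 \<le> k" "k \<le> n - 1" for i k
    using diag_in_arrow_closed_iff[OF closed that] unfolding P_def .
  have inj: "inj_on (tau_m m n) (m_diagonals m n)"
    using stable_translation_quiver_m_diagonals
    unfolding stable_translation_quiver_def bij_betw_def by blast
  have "tau_m m n (diag m n (i + int m) 1) = diag m n i 1" for i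
    unfolding tau_m_eq_rotation rotation_diag by simp
  then have shift_m: "P (i + int m) \<longleftrightarrow> P i" for i
    using inj_on_image_mem_iff[OF inj _ sub, of "diag m n (i + int m) 1"] m_diagonal_diag[of 1 n]
    n tau_closed unfolding P_def m_diagonals_def by auto
  have shift_m1: "P (i + int m + 1) \<longleftrightarrow> P i" for i
    using row[of "n - 1" "i + int m + 1"] n unfolding P_def diag_first_eq_last[OF n, of m i] by simp
  have "P (j + 1) \<longleftrightarrow> P j" for j
    using shift_m[of "j - int m"] shift_m1[of "j - int m"] by simp
  then have "P i" for i
    using int_pred_constant \<open>P i0\<close> by blast
  then show ?thesis
    using sub row unfolding m_diagonals_def m_diagonal_iff_diag by blast
qed

theorem proposition2p3:
  fixes m n :: nat
  assumes "m \<ge> 1" and "n \<ge> 2"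
  shows "connected_stable_translation_quiver (m_diagonals m n) (Gamma_arrow m n) (tau_m m n)"
  using stable_translation_quiver_m_diagonals closed_subset_eq_m_diagonals
  by (rule connected_stable_translation_quiverI)

end
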